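(* Let $\mathcal G=(\mathcal V,\mathcal E)$ be a digraph (network) and $u\in\mathcal V$ an agent executing Phase 1 of the protocol described in the context (not counting steps that call other phases). Then the time-complexity of Phase 1 for agent $u$ is $\mathcal O(\max\{|\mathcal N^-(u)||\mathcal E|,\ |\mathcal V|+|\mathcal E|\})$, where $\mathcal N^-(u)=\{v:(v,u)\in\mathcal E\}$.
   Context: Agents are the nodes of a digraph $(\mathcal V,\mathcal E)$, with unique integer IDs, each knowing its in- and out-neighbors, communicating synchronously along edges ($v$ receives from $u$ if $(u,v)\in\mathcal E$). Phase 1 for agent $u$: $u$ initially knows the set of its outgoing edges $\{(u,v):(u,v)\in\mathcal E\}$; repeatedly, it sends the edges newly learned in the previous step to all its out-neighbors and adds to its known set all edges received from its in-neighbors, until no new edges are learned. Then $u$ computes, with Tarjan's algorithm, the strongly connected components (SCCs) of the digraph formed by its known edges, and classifies its own SCC $\mathcal S$ as a source (no known edge from outside $\mathcal S$ into $\mathcal S$), a target (no known edge from $\mathcal S$ to outside), mixed (both kinds exist) or isolated (neither exists), and then decides which phase to go to next. *)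

theory Defs
  imports Main
begin

type_synonym edge = "int \<times> int"

definition in_nbrs :: "edge set \<Rightarrow> int \<Rightarrow> int set" where
  "in_nbrs E u = {v. (v, u) \<in> E}"

text \<open>Synchronous execution of the flooding part of Phase 1, for all agents in
  lockstep.  flood E t v = (K, N): K is the set of edges known by agent v after
  step t, N the set of edges newly learned at step t (sent at step t+1).\<close>
primrec flood :: "edge set \<Rightarrow> nat \<Rightarrow> int \<Rightarrow> edge set \<times> edge set" where
  "flood E 0 = (\<lambda>v. ({e \<in> E. fst e = v}, {e \<in> E. fst e = v}))"
| "flood E (Suc t) =
     (let s = flood E t in
      (\<lambda>v. let K' = fst (s v) \<union> (\<Union>w \<in> in_nbrs E v. snd (s w))
           in (K', K' - fst (s v))))"

definition known :: "edge set \<Rightarrow> int \<Rightarrow> nat \<Rightarrow> edge set" where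
  "known E v t = fst (flood E t v)"

definition new_edges :: "edge set \<Rightarrow> int \<Rightarrow> nat \<Rightarrow> edge set" where
  "new_edges E v t = snd (flood E t v)"

definition stop_step :: "edge set \<Rightarrow> int \<Rightarrow> nat" where
  "stop_step E u = (LEAST t. 0 < t \<and> new_edges E u t = {})"

text \<open>Cost model (number of elementary operations of agent u in Phase 1):
  one unit of overhead per step; one unit per edge sent (agent u broadcasts its
  newly learned edges of step t at step t+1) and per edge received from each
  in-neighbour; Tarjan's algorithm on the known digraph with its standard cost
  (#vertices + #edges, vertices being u and the endpoints of known edges);
  classification of u's SCC by one scan over the known edges.\<close>
definition phase1_cost :: "edge set \<Rightarrow> int \<Rightarrow> nat" where
  "phase1_cost E u =
     (let T = stop_step E u; K = known E u T in
        T
      + (\<Sum>t<T. card (new_edges E u t) + (\<Sum>w \<in> in_nbrs E u. card (new_edges E w t)))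
      + (card (insert u (Field K)) + card K)
      + card K)"

end

theory Submission
  imports Defs
begin

text \<open>Each agent learns every edge at most once, so the numbers of edges it sends over the
  whole run add up to at most \<open>|E|\<close>; receiving from the in-neighbours therefore costs at most
  \<open>|N\<^sup>-(u)| |E|\<close>. Before it stops, agent \<open>u\<close> learns a new edge in every step, so
  flooding takes at most \<open>|E| + 1\<close> steps. Tarjan's algorithm and the classification run on
  a subgraph of \<open>(V, E)\<close> and cost \<open>O(|V| + |E|)\<close>.\<close>

lemma known_0 [simp]: "known E v 0 = {e \<in> E. fst e = v}"
  by (simp add: known_def)

lemma new_edges_0 [simp]: "new_edges E v 0 = {e \<in> E. fst e = v}"
  by (simp add: new_edges_def)

lemma known_Suc:
  "known E v (Suc t) = known E v t \<union> (\<Union>w \<in> in_nbrs E v. new_edges E w t)"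
  by (simp add: known_def new_edges_def Let_def)

lemma new_edges_Suc: "new_edges E v (Suc t) = known E v (Suc t) - known E v t"
  by (simp add: known_def new_edges_def Let_def)

lemma known_subset_Suc: "known E v t \<subseteq> known E v (Suc t)"
  by (auto simp: known_Suc)

lemma known_subset: "known E v t \<subseteq> E"
proof (induction t arbitrary: v)
  case 0
  then show ?case by auto
next
  case (Suc t)
  have "new_edges E w t \<subseteq> E" for w
    by (cases t) (use Suc.IH in \<open>auto simp: new_edges_Suc\<close>)
  with Suc.IH show ?case by (auto simp: known_Suc)
qed

lemma finite_known: "finite E \<Longrightarrow> finite (known E v t)"
  using finite_subset[OF known_subset] .

lemma sum_card_new_edges_eq:
  assumes "finite E"
  shows "(\<Sum>t<Suc n. card (new_edges E v t)) = card (known E v n)"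
proof (induction n)
  case 0
  then show ?case by simp
next
  case (Suc n)
  have "card (new_edges E v (Suc n)) = card (known E v (Suc n)) - card (known E v n)"
    unfolding new_edges_Suc
    using card_Diff_subset[OF finite_known[OF assms] known_subset_Suc] .
  moreover have "card (known E v n) \<le> card (known E v (Suc n))"
    using card_mono[OF finite_known[OF assms] known_subset_Suc] .
  ultimately show ?case using Suc.IH by simp
qed

lemma sum_card_new_edges_le:
  assumes "finite E"
  shows "(\<Sum>t<n. card (new_edges E v t)) \<le> card E"
proof (cases n)
  case 0
  then show ?thesis by simp
next
  case (Suc m)
  then show ?thesis
    using sum_card_new_edges_eq[OF assms, where n = m and v = v] card_mono[OF assms known_subset] by simp
qed

lemma card_known_ge_steps:
  assumes "finite E" and learning: "\<And>s. 0 < s \<Longrightarrow> s \<le> t \<Longrightarrow> new_edges E v s \<noteq> {}"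
  shows "t \<le> card (known E v t)"
  using learning
proof (induction t)
  case 0
  then show ?case by simp
next
  case (Suc t)
  have "new_edges E v (Suc t) \<noteq> {}" using Suc.prems by simp
  then have "known E v t \<subset> known E v (Suc t)"
    using known_subset_Suc[of E v t] unfolding new_edges_Suc by blast
  then have "card (known E v t) < card (known E v (Suc t))"
    using psubset_card_mono[OF finite_known[OF assms(1)]] by blast
  moreover have "t \<le> card (known E v t)" using Suc by simp
  ultimately show ?case by simp
qed

lemma stop_step_le:
  assumes "finite E"
  shows "stop_step E u \<le> card E + 1"
proof -
  have "\<exists>s. 0 < s \<and> s \<le> card E + 1 \<and> new_edges E u s = {}"
  proof (rule ccontr)
    assume "\<not> ?thesis"
    then have "card E + 1 \<le> card (known E u (card E + 1))"
      using card_known_ge_steps[OF assms] by blast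
    moreover have "card (known E u (card E + 1)) \<le> card E"
      using card_mono[OF assms known_subset] .
    ultimately show False by simp
  qed
  then obtain s where s: "0 < s" "s \<le> card E + 1" "new_edges E u s = {}" by blast
  have "stop_step E u \<le> s"
    unfolding stop_step_def by (rule Least_le) (use s in auto)
  with s show ?thesis by simp
qed

lemma sum_card_received_le:
  assumes "finite E"
  shows "(\<Sum>t<n. \<Sum>w \<in> in_nbrs E u. card (new_edges E w t)) \<le> card (in_nbrs E u) * card E"
proof -
  have "(\<Sum>t<n. \<Sum>w \<in> in_nbrs E u. card (new_edges E w t))
        = (\<Sum>w \<in> in_nbrs E u. \<Sum>t<n. card (new_edges E w t))"
    by (rule sum.swap)
  also have "\<dots> \<le> (\<Sum>w \<in> in_nbrs E u. card E)"
    by (rule sum_mono) (rule sum_card_new_edges_le[OF assms])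
  finally show ?thesis by simp
qed

lemma phase1_cost_le:
  assumes "finite E"
  shows "phase1_cost E u
    \<le> card (in_nbrs E u) * card E + card (insert u (Field E)) + 4 * card E + 1"
proof -
  define T where "T = stop_step E u"
  define K where "K = known E u T"
  have "card K \<le> card E"
    using card_mono[OF assms] known_subset K_def by blast
  moreover have "card (insert u (Field K)) \<le> card (insert u (Field E))"
    using mono_Field[OF known_subset[of E u T]] finite_Field[OF assms] unfolding K_def
    by (intro card_mono) auto
  moreover have "phase1_cost E u = T + (\<Sum>t<T. card (new_edges E u t))
      + (\<Sum>t<T. \<Sum>w \<in> in_nbrs E u. card (new_edges E w t))
      + card (insert u (Field K)) + 2 * card K"
    unfolding phase1_cost_def T_def[symmetric] K_def[symmetric] Let_def sum.distrib by simp
  ultimately show ?thesis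
    using stop_step_le[OF assms, of u] sum_card_new_edges_le[OF assms, where n = T and v = u]
      sum_card_received_le[OF assms, where n = T and u = u]
    unfolding T_def by linarith
qed

theorem proposition3:
  shows "\<exists>C::nat. \<forall>(V::int set) (E::edge set) u.
           finite V \<longrightarrow> E \<subseteq> V \<times> V \<longrightarrow> u \<in> V \<longrightarrow>
           phase1_cost E u \<le> C * max (card (in_nbrs E u) * card E) (card V + card E)"
proof (intro exI allI impI)
  fix V :: "int set" and E :: "edge set" and u
  assume V: "finite V" and EV: "E \<subseteq> V \<times> V" and u: "u \<in> V"
  have "finite E" using V EV finite_subset by blast
  have "card (insert u (Field E)) \<le> card V"
    using V EV u by (intro card_mono) (auto simp: Field_def)
  moreover have "1 \<le> card V" using u V card_0_eq by fastforce
  ultimately show "phase1_cost E u \<le> 6 * max (card (in_nbrs E u) * card E) (card V + card E)"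
    using phase1_cost_le[OF \<open>finite E\<close>, of u] by (simp add: max_def)
qed

end
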